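(* Fix a context $s$ of a contextual bandit with finite action set $\mathcal{A}$, a policy $\pi_{\mathrm{old}}(\cdot\mid s)$ with full support, a reward $r(s,\cdot)$ that is not constant on $\mathcal{A}$, a constant $\delta(s)>0$ and $\epsilon\in(0,1)$. Let $A(a)=r(s,a)-\mathbb{E}_{a'\sim\pi_{\mathrm{old}}}[r(s,a')]$ and, for $\bar{\pi}(\cdot\mid s)\in\Delta(\mathcal{A})$ with $\rho(a)=\bar{\pi}(a\mid s)/\pi_{\mathrm{old}}(a\mid s)$, $$\mathfrak{D}^{\mathrm{GSPO}}_{\pi_{\mathrm{old}}}(\bar{\pi}\mid s)=\mathbb{E}_{a\sim\pi_{\mathrm{old}}}\Big[\rho(a)A(a)-\min\Big(\frac{\rho(a)A(a)}{\delta(s)},\frac{\mathrm{clip}(\rho(a),1\pm\epsilon)A(a)}{\delta(s)}\Big)\Big].$$ Then $\mathfrak{D}^{\mathrm{GSPO}}_{\pi_{\mathrm{old}}}(\bar{\pi}\mid s)\ge0$ for all $\bar{\pi}(\cdot\mid s)\in\Delta(\mathcal{A})$ if and only if $\delta(s)=1$. Consequently, the drift is nonnegative at every context for all such policies if and only if $\delta\equiv1$.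
   Context: This is the drift functional induced by a PPO-style clipped objective with group-variance-normalized advantages $A/\delta(s)$ (as in GSPO), where $\delta(s)$ is the (positive) standard deviation of rewards in the group sampled for context $s$, treated as a fixed positive number. $\mathrm{clip}(x,1\pm\epsilon)=\min(\max(x,1-\epsilon),1+\epsilon)$. *)

theory Defs
  imports Complex_Main
begin

definition clip :: "real \<Rightarrow> real \<Rightarrow> real" where
  "clip \<epsilon> x = min (max x (1 - \<epsilon>)) (1 + \<epsilon>)"

definition simplex :: "('a::finite \<Rightarrow> real) set" where
  "simplex = {p. (\<forall>a. 0 \<le> p a) \<and> (\<Sum>a\<in>UNIV. p a) = 1}"

definition adv :: "('a::finite \<Rightarrow> real) \<Rightarrow> ('a \<Rightarrow> real) \<Rightarrow> 'a \<Rightarrow> real" where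
  "adv \<pi>old r a = r a - (\<Sum>a'\<in>UNIV. \<pi>old a' * r a')"

definition gspo_drift ::
  "('a::finite \<Rightarrow> real) \<Rightarrow> ('a \<Rightarrow> real) \<Rightarrow> real \<Rightarrow> real \<Rightarrow> ('a \<Rightarrow> real) \<Rightarrow> real" where
  "gspo_drift \<pi>old r \<delta> \<epsilon> \<pi>bar =
     (\<Sum>a\<in>UNIV. \<pi>old a *
        (let \<rho> = \<pi>bar a / \<pi>old a; A = adv \<pi>old r a in
           \<rho> * A - min (\<rho> * A / \<delta>) (clip \<epsilon> \<rho> * A / \<delta>)))"

end

theory Submission
  imports Defs
begin

text \<open>For \<open>\<delta> = 1\<close> every summand is \<open>\<rho>A - min (\<rho>A) (clip \<rho> \<cdot> A) \<ge> 0\<close>. For \<open>\<delta> \<noteq> 1\<close>,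
  move mass \<open>\<epsilon> \<pi>\<^sub>o\<^sub>l\<^sub>d(c)\<close> from \<open>\<pi>\<^sub>o\<^sub>l\<^sub>d\<close> onto a single action \<open>c\<close>. All likelihood ratios of the
  resulting policy stay in \<open>[1 - \<epsilon>, 1 + \<epsilon>]\<close>, so nothing is clipped and the drift collapses
  to \<open>(1 - 1/\<delta>)\<close> times the expected advantage under the new policy, which is
  \<open>\<epsilon> \<pi>\<^sub>o\<^sub>l\<^sub>d(c) A(c)\<close>. Advantages have mean zero under \<open>\<pi>\<^sub>o\<^sub>l\<^sub>d\<close> and do not all vanish when the
  reward is not constant, so \<open>c\<close> can be chosen with \<open>A(c)\<close> of either sign, making the drift
  negative.\<close>

lemma clip_eq_self:
  assumes "1 - \<epsilon> \<le> x" "x \<le> 1 + \<epsilon>"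
  shows "clip \<epsilon> x = x"
  using assms unfolding clip_def by simp

lemma gspo_drift_nonneg_delta_1:
  fixes p :: "'a::finite \<Rightarrow> real"
  assumes "\<And>a. 0 \<le> p a"
  shows "gspo_drift p r 1 \<epsilon> q \<ge> 0"
  unfolding gspo_drift_def Let_def
  by (rule sum_nonneg) (simp add: assms min_def)

lemma gspo_drift_unclipped:
  fixes p :: "'a::finite \<Rightarrow> real"
  assumes pos: "\<And>a. 0 < p a"
    and ratio: "\<And>a. 1 - \<epsilon> \<le> q a / p a" "\<And>a. q a / p a \<le> 1 + \<epsilon>"
  shows "gspo_drift p r d \<epsilon> q = (1 - 1/d) * (\<Sum>a\<in>UNIV. q a * adv p r a)"
proof -
  have "p a * (q a / p a * adv p r a - min (q a / p a * adv p r a / d)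
          (clip \<epsilon> (q a / p a) * adv p r a / d)) = (1 - 1/d) * (q a * adv p r a)" for a
    using pos[of a] by (simp add: clip_eq_self[OF ratio(1,2)] field_simps)
  then show ?thesis
    unfolding gspo_drift_def Let_def by (simp add: sum_distrib_left)
qed

lemma simplex_le_1:
  assumes "p \<in> simplex"
  shows "p a \<le> 1"
proof -
  have "p a \<le> (\<Sum>b\<in>UNIV. p b)"
    using assms by (intro member_le_sum) (auto simp: simplex_def)
  then show ?thesis
    using assms by (simp add: simplex_def)
qed

lemma sum_adv_eq_0:
  fixes p :: "'a::finite \<Rightarrow> real"
  assumes "p \<in> simplex"
  shows "(\<Sum>a\<in>UNIV. p a * adv p r a) = 0"
proof -
  define m where "m = (\<Sum>a\<in>UNIV. p a * r a)"
  have "(\<Sum>a\<in>UNIV. p a * adv p r a) = (\<Sum>a\<in>UNIV. p a * r a) - (\<Sum>a\<in>UNIV. p a) * m"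
    unfolding adv_def m_def by (simp add: right_diff_distrib sum_subtractf sum_distrib_right)
  then show ?thesis
    using assms by (simp add: simplex_def m_def)
qed

lemma adv_nonzero:
  assumes "r a \<noteq> r b"
  shows "adv p r a \<noteq> 0 \<or> adv p r b \<noteq> 0"
  using assms unfolding adv_def by auto

lemma weighted_sum_eq_0_imp_neg:
  fixes f w :: "'a \<Rightarrow> real"
  assumes "finite A" and pos: "\<And>a. a \<in> A \<Longrightarrow> 0 < w a" and sum0: "(\<Sum>a\<in>A. w a * f a) = 0"
    and "c \<in> A" "f c \<noteq> 0"
  shows "\<exists>a\<in>A. f a < 0"
proof (rule ccontr)
  assume "\<not> (\<exists>a\<in>A. f a < 0)"
  then have "\<forall>a\<in>A. 0 \<le> w a * f a"
    using pos by (auto intro: mult_nonneg_nonneg less_imp_le simp: not_less)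
  then have "w c * f c = 0"
    using sum_nonneg_eq_0_iff[OF \<open>finite A\<close>, of "\<lambda>a. w a * f a"] sum0 \<open>c \<in> A\<close> by blast
  then show False
    using pos[OF \<open>c \<in> A\<close>] \<open>f c \<noteq> 0\<close> by simp
qed

lemma adv_neg_and_pos:
  fixes p :: "'a::finite \<Rightarrow> real"
  assumes "p \<in> simplex" "\<And>a. 0 < p a" "r a \<noteq> r b"
  shows "\<exists>a. adv p r a < 0" "\<exists>a. 0 < adv p r a"
proof -
  obtain c where c: "adv p r c \<noteq> 0"
    using adv_nonzero[OF assms(3)] by blast
  have sum0: "(\<Sum>a\<in>UNIV. p a * adv p r a) = 0"
    using sum_adv_eq_0[OF assms(1)] .
  then have "(\<Sum>a\<in>UNIV. p a * - adv p r a) = 0"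
    by (simp add: sum_negf)
  with weighted_sum_eq_0_imp_neg[of UNIV p "\<lambda>a. - adv p r a" c] assms(2) c
  show "\<exists>a. 0 < adv p r a"
    by (simp add: neg_less_0_iff_less)
  from weighted_sum_eq_0_imp_neg[of UNIV p "adv p r" c] sum0 assms(2) c
  show "\<exists>a. adv p r a < 0"
    by simp
qed

definition point_mix :: "('a \<Rightarrow> real) \<Rightarrow> real \<Rightarrow> 'a \<Rightarrow> 'a \<Rightarrow> real" where
  "point_mix p t c b = (1 - t) * p b + (if b = c then t else 0)"

lemma point_mix_in_simplex:
  assumes "p \<in> simplex" "0 \<le> t" "t \<le> 1"
  shows "point_mix p t c \<in> simplex"
  using assms
  by (auto simp: simplex_def point_mix_def sum.distrib sum_distrib_left[symmetric])

lemma sum_point_mix_adv: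
  fixes p :: "'a::finite \<Rightarrow> real"
  assumes "p \<in> simplex"
  shows "(\<Sum>b\<in>UNIV. point_mix p t c b * adv p r b) = t * adv p r c"
proof -
  have "(\<Sum>b\<in>UNIV. point_mix p t c b * adv p r b)
      = (1 - t) * (\<Sum>b\<in>UNIV. p b * adv p r b) + t * adv p r c"
    by (simp add: point_mix_def distrib_right sum.distrib sum_distrib_left mult.assoc
        if_distrib[of "\<lambda>x. x * _"] cong: if_cong)
  then show ?thesis
    using sum_adv_eq_0[OF assms] by simp
qed

lemma gspo_drift_point_mix:
  fixes p :: "'a::finite \<Rightarrow> real"
  assumes simp: "p \<in> simplex" and pos: "\<And>a. 0 < p a" and eps: "0 < \<epsilon>" "\<epsilon> < 1"
  shows "point_mix p (\<epsilon> * p c) c \<in> simplex"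
    and "gspo_drift p r d \<epsilon> (point_mix p (\<epsilon> * p c) c) = (1 - 1/d) * (\<epsilon> * p c * adv p r c)"
proof -
  define t where "t = \<epsilon> * p c"
  have t: "0 \<le> t" "t \<le> \<epsilon>"
    using eps pos[of c] simplex_le_1[OF simp, of c] unfolding t_def
    by (auto simp: mult_left_le)
  have "t \<le> 1"
    using t eps by simp
  from point_mix_in_simplex[OF simp t(1) this]
  show "point_mix p (\<epsilon> * p c) c \<in> simplex"
    unfolding t_def .
  have "point_mix p t c b / p b = 1 - t + (if b = c then \<epsilon> else 0)" for b
    using pos[of b] unfolding point_mix_def t_def by (auto simp: field_simps)
  then have "1 - \<epsilon> \<le> point_mix p t c b / p b" "point_mix p t c b / p b \<le> 1 + \<epsilon>" for b
    using t eps by auto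
  from gspo_drift_unclipped[where q = "point_mix p t c", OF pos this] sum_point_mix_adv[OF simp]
  show "gspo_drift p r d \<epsilon> (point_mix p (\<epsilon> * p c) c) = (1 - 1/d) * (\<epsilon> * p c * adv p r c)"
    unfolding t_def by simp
qed

lemma gspo_drift_nonneg_iff_delta_1:
  fixes p :: "'a::finite \<Rightarrow> real"
  assumes simp: "p \<in> simplex" and pos: "\<And>a. 0 < p a" and nonconst: "\<exists>a b. r a \<noteq> r b"
    and "0 < d" and eps: "0 < \<epsilon>" "\<epsilon> < 1"
  shows "(\<forall>q\<in>simplex. gspo_drift p r d \<epsilon> q \<ge> 0) \<longleftrightarrow> d = 1"
proof
  assume nonneg: "\<forall>q\<in>simplex. gspo_drift p r d \<epsilon> q \<ge> 0"
  have drift_mix: "0 \<le> (1 - 1/d) * (\<epsilon> * p c * adv p r c)" for c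
    using nonneg gspo_drift_point_mix[OF simp pos eps] by metis
  obtain cn cp where "adv p r cn < 0" "0 < adv p r cp"
    using nonconst adv_neg_and_pos[OF simp pos] by metis
  then have "\<epsilon> * p cn * adv p r cn < 0" "0 < \<epsilon> * p cp * adv p r cp"
    using pos eps by (simp_all add: mult_pos_neg)
  with drift_mix[of cn] drift_mix[of cp] have "1 - 1/d \<le> 0" "0 \<le> 1 - 1/d"
    by (metis mult_pos_neg not_le, metis mult_neg_pos not_le)
  then show "d = 1"
    using \<open>0 < d\<close> by (simp add: field_simps)
next
  assume "d = 1"
  then show "\<forall>q\<in>simplex. gspo_drift p r d \<epsilon> q \<ge> 0"
    using gspo_drift_nonneg_delta_1 pos less_imp_le by blast
qed

theorem lemma8:
  fixes \<pi>old :: "'s \<Rightarrow> 'a::finite \<Rightarrow> real"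
    and r :: "'s \<Rightarrow> 'a \<Rightarrow> real"
    and \<delta> :: "'s \<Rightarrow> real"
    and \<epsilon> :: real
  assumes pol: "\<And>s. \<pi>old s \<in> simplex"
    and full_support: "\<And>s a. \<pi>old s a > 0"
    and nonconst: "\<And>s. \<exists>a b. r s a \<noteq> r s b"
    and delta_pos: "\<And>s. \<delta> s > 0"
    and eps: "0 < \<epsilon>" "\<epsilon> < 1"
  shows "(\<forall>s. (\<forall>\<pi>bar\<in>simplex. gspo_drift (\<pi>old s) (r s) (\<delta> s) \<epsilon> \<pi>bar \<ge> 0)
                \<longleftrightarrow> \<delta> s = 1)
         \<and> ((\<forall>s. \<forall>\<pi>bar\<in>simplex. gspo_drift (\<pi>old s) (r s) (\<delta> s) \<epsilon> \<pi>bar \<ge> 0)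
                \<longleftrightarrow> (\<forall>s. \<delta> s = 1))"
  using gspo_drift_nonneg_iff_delta_1[OF pol full_support nonconst delta_pos eps] by blast

end
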